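(* Let $G$ be a graph with $n$ nodes and $\pi\in S_n$. Then $\pi$ is representable by $G$ if and only if there is no $\mathbf y\in\mathbb{R}^{n-1}$ with $(\Xi R_\pi C_G)^T\mathbf y=\mathbf 0$, $\mathbf y\ge\mathbf 0$ and $\mathbf y\ne\mathbf 0$.
   Context: Graphs are finite directed graphs with nodes $\{0,\dots,n-1\}$; $d_G(x,y)$ is the shortest directed path length from $x$ to $y$ ($\infty$ if none). The distance-count matrix $C_G\in\mathbb{R}^{n\times n}$ has $(C_G)_{i,k}=|\{j: d_G(j,i)=k\}|$ (indices from 0). For $\mathbf a\in\mathbb{R}^{\mathbb{N}}$ the linear centrality is $f^{\mathbf a}_G(i)=\sum_{k=0}^{n-1}(C_G)_{i,k}a_k$. $\pi$ is representable by $G$ if there is $\mathbf a$ with $f^{\mathbf a}_G(\pi(0))>f^{\mathbf a}_G(\pi(1))>\dots>f^{\mathbf a}_G(\pi(n-1))$. $R_\pi$ is the $n\times n$ 0/1 matrix with $(R_\pi)_{ij}=1$ iff $\pi(i)=j$. $\Xi\in\mathbb{R}^{(n-1)\times n}$ is the matrix with $\Xi_{i,i}=-1$, $\Xi_{i,i+1}=1$ for $0\le i\le n-2$, and all other entries $0$. Inequalities between vectors are entrywise. *)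

theory Defs
  imports "Jordan_Normal_Form.Matrix" "HOL-Combinatorics.Permutations" "HOL-Library.Extended_Nat"
begin

definition graph :: "nat \<Rightarrow> (nat \<times> nat) set \<Rightarrow> bool" where
  "graph n E \<longleftrightarrow> E \<subseteq> {0..<n} \<times> {0..<n}"

definition gdist :: "(nat \<times> nat) set \<Rightarrow> nat \<Rightarrow> nat \<Rightarrow> enat" where
  "gdist E x y = (if \<exists>k. (x, y) \<in> E ^^ k then enat (LEAST k. (x, y) \<in> E ^^ k) else \<infinity>)"

definition dist_count_mat :: "nat \<Rightarrow> (nat \<times> nat) set \<Rightarrow> real mat" where
  "dist_count_mat n E = mat n n (\<lambda>(i, k). real (card {j \<in> {0..<n}. gdist E j i = enat k}))"

definition lin_centrality :: "nat \<Rightarrow> (nat \<times> nat) set \<Rightarrow> (nat \<Rightarrow> real) \<Rightarrow> nat \<Rightarrow> real" where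
  "lin_centrality n E a i = (\<Sum>k<n. dist_count_mat n E $$ (i, k) * a k)"

definition representable :: "nat \<Rightarrow> (nat \<times> nat) set \<Rightarrow> (nat \<Rightarrow> nat) \<Rightarrow> bool" where
  "representable n E \<pi> \<longleftrightarrow> (\<exists>a :: nat \<Rightarrow> real.
     \<forall>i. i + 1 < n \<longrightarrow> lin_centrality n E a (\<pi> i) > lin_centrality n E a (\<pi> (i + 1)))"

definition perm_mat :: "nat \<Rightarrow> (nat \<Rightarrow> nat) \<Rightarrow> real mat" where
  "perm_mat n \<pi> = mat n n (\<lambda>(i, j). if \<pi> i = j then 1 else 0)"

definition Xi_mat :: "nat \<Rightarrow> real mat" where
  "Xi_mat n = mat (n - 1) n (\<lambda>(i, j). if j = i then -1 else if j = i + 1 then 1 else 0)"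

end

theory Submission
  imports Defs "HOL-Analysis.Function_Topology"
begin

(* Row i of Xi R_pi C_G is C_G(pi (i+1)) - C_G(pi i), so a weight vector a represents pi exactly
   when x = -a solves (Xi R_pi C_G) x > 0. Representability is therefore Gordan's theorem of the
   alternative for the matrix Xi R_pi C_G.

   Gordan's theorem for the rows M_0, ..., M_(m-1) of a matrix is proved with the point w of minimal
   norm in their convex hull, which exists by compactness of the simplex of weights. Minimality
   gives <w, M_j> >= |w|^2 for every j, so either w = 0, and its weights form a nonzero
   nonnegative y with y^T M = 0, or every <M_j, w> is positive. *)

definition weight_simplex :: "nat \<Rightarrow> (nat \<Rightarrow> real) set" where
  "weight_simplex m = {y. (\<forall>i<m. 0 \<le> y i) \<and> (\<forall>i\<ge>m. y i = 0) \<and> (\<Sum>i<m. y i) = 1}"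

lemma compact_weight_simplex: "compact (weight_simplex m)"
proof -
  have "y i \<le> 1" if "y \<in> weight_simplex m" "i < m" for y i
    using that member_le_sum[of i "{..<m}" y] by (auto simp: weight_simplex_def)
  then have "weight_simplex m = (\<Pi>\<^sub>E i\<in>UNIV. if i < m then {0..1} else {0}) \<inter> {y. (\<Sum>i<m. y i) = 1}"
    by (auto simp: weight_simplex_def PiE_iff split: if_splits)
  also have "compact \<dots>"
  proof (rule compact_Int_closed)
    have "compactin (product_topology (\<lambda>i. euclidean) UNIV)
        (\<Pi>\<^sub>E i\<in>UNIV. if i < m then {0..1::real} else {0})"
      by (subst compactin_PiE) auto
    then show "compact (\<Pi>\<^sub>E i\<in>UNIV. if i < m then {0..1::real} else {0})"
      by (simp add: euclidean_product_topology)
    show "closed {y::nat \<Rightarrow> real. (\<Sum>i<m. y i) = 1}"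
      by (intro closed_Collect_eq continuous_intros continuous_on_product_coordinates)
  qed
  finally show ?thesis .
qed

lemma basis_in_weight_simplex: "j < m \<Longrightarrow> (\<lambda>i. if i = j then 1 else 0) \<in> weight_simplex m"
  by (simp add: weight_simplex_def)

lemma weight_simplex_segment:
  assumes "y \<in> weight_simplex m" "z \<in> weight_simplex m" "0 \<le> t" "t \<le> 1"
  shows "(\<lambda>i. (1 - t) * y i + t * z i) \<in> weight_simplex m"
  using assms by (simp add: weight_simplex_def sum.distrib flip: sum_distrib_left)

lemma nonneg_if_nonneg_perturbations:
  fixes b d :: real
  assumes "\<And>t. 0 < t \<Longrightarrow> t \<le> 1 \<Longrightarrow> 0 \<le> b + t * d"
  shows "0 \<le> b"
proof (rule ccontr)
  assume "\<not> 0 \<le> b"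
  then have b: "b < 0" by simp
  with assms[of 1] have d: "0 < d" by simp
  define t where "t = min 1 (- b / (2 * d))"
  have "0 < t" "t \<le> 1" using b d by (auto simp: t_def field_simps)
  moreover have "t * d < - b"
    using b d by (auto simp: t_def min_def field_simps)
  ultimately show False using assms[of t] by linarith
qed

definition row_comb :: "(nat \<Rightarrow> nat \<Rightarrow> real) \<Rightarrow> nat \<Rightarrow> (nat \<Rightarrow> real) \<Rightarrow> nat \<Rightarrow> real" where
  "row_comb M m y k = (\<Sum>i<m. y i * M i k)"

lemma row_comb_basis: "j < m \<Longrightarrow> row_comb M m (\<lambda>i. if i = j then 1 else 0) k = M j k"
  by (simp add: row_comb_def if_distrib[of "\<lambda>x. x * _"] cong: if_cong)

lemma row_comb_segment:
  "row_comb M m (\<lambda>i. (1 - t) * y i + t * z i) k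
    = row_comb M m y k + t * (row_comb M m z k - row_comb M m y k)"
  by (simp add: row_comb_def algebra_simps sum.distrib sum_subtractf flip: sum_distrib_left)

lemma min_norm_row_comb_variational:
  assumes y: "y \<in> weight_simplex m"
    and min: "\<And>z. z \<in> weight_simplex m \<Longrightarrow>
      (\<Sum>k<n. (row_comb M m y k)\<^sup>2) \<le> (\<Sum>k<n. (row_comb M m z k)\<^sup>2)"
    and z: "z \<in> weight_simplex m"
  shows "(\<Sum>k<n. (row_comb M m y k)\<^sup>2) \<le> (\<Sum>k<n. row_comb M m y k * row_comb M m z k)"
proof -
  define w where "w = row_comb M m y"
  define d where "d k = row_comb M m z k - w k" for k
  have "0 \<le> 2 * (\<Sum>k<n. w k * d k) + t * (\<Sum>k<n. (d k)\<^sup>2)" if t: "0 < t" "t \<le> 1" for t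
  proof -
    let ?yt = "\<lambda>i. (1 - t) * y i + t * z i"
    have "(\<Sum>k<n. (row_comb M m ?yt k)\<^sup>2)
        = (\<Sum>k<n. (w k)\<^sup>2) + t * (2 * (\<Sum>k<n. w k * d k) + t * (\<Sum>k<n. (d k)\<^sup>2))"
      by (simp add: row_comb_segment flip: w_def d_def)
        (simp add: power2_eq_square algebra_simps sum.distrib sum_distrib_left)
    moreover have "(\<Sum>k<n. (w k)\<^sup>2) \<le> (\<Sum>k<n. (row_comb M m ?yt k)\<^sup>2)"
      unfolding w_def using t by (intro min weight_simplex_segment[OF y z]) auto
    ultimately have "0 \<le> t * (2 * (\<Sum>k<n. w k * d k) + t * (\<Sum>k<n. (d k)\<^sup>2))"
      by linarith
    with t show ?thesis
      by (simp add: zero_le_mult_iff)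
  qed
  then have "0 \<le> 2 * (\<Sum>k<n. w k * d k)"
    by (rule nonneg_if_nonneg_perturbations) auto
  then show ?thesis
    by (simp add: w_def d_def right_diff_distrib power2_eq_square sum_subtractf)
qed

lemma no_semipositive_left_null_if_positive_solution:
  assumes a: "\<forall>i<m. 0 < (\<Sum>k<n. M i k * a k)"
    and y: "\<forall>i<m. 0 \<le> y i" "\<forall>k<n. row_comb M m y k = 0"
  shows "\<forall>i<m. y i = 0"
proof -
  have "(\<Sum>i<m. y i * (\<Sum>k<n. M i k * a k)) = (\<Sum>k<n. row_comb M m y k * a k)"
    by (simp add: row_comb_def sum_distrib_left sum_distrib_right mult.assoc sum.swap[of _ "{..<m}"])
  also have "\<dots> = 0"
    using y by simp
  finally have "\<forall>i<m. y i * (\<Sum>k<n. M i k * a k) = 0"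
    using a y by (subst (asm) sum_nonneg_eq_0_iff) auto
  with a show ?thesis
    by fastforce
qed

lemma positive_solution_if_no_semipositive_left_null:
  assumes "\<nexists>y. (\<forall>i<m. 0 \<le> y i) \<and> (\<exists>i<m. y i \<noteq> 0) \<and> (\<forall>k<n. row_comb M m y k = 0)"
  shows "\<exists>a. \<forall>i<m. 0 < (\<Sum>k<n. M i k * a k)"
proof (cases "m = 0")
  case False
  have "continuous_on (weight_simplex m) (\<lambda>y. \<Sum>k<n. (row_comb M m y k)\<^sup>2)"
    unfolding row_comb_def
    by (intro continuous_intros continuous_on_subset[OF continuous_on_product_coordinates]) auto
  moreover have "weight_simplex m \<noteq> {}"
    using basis_in_weight_simplex False by blast
  ultimately have "\<exists>y \<in> weight_simplex m. \<forall>z \<in> weight_simplex m.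
      (\<Sum>k<n. (row_comb M m y k)\<^sup>2) \<le> (\<Sum>k<n. (row_comb M m z k)\<^sup>2)"
    by (intro continuous_attains_inf compact_weight_simplex)
  then obtain y where y: "y \<in> weight_simplex m" and min: "\<And>z. z \<in> weight_simplex m \<Longrightarrow>
      (\<Sum>k<n. (row_comb M m y k)\<^sup>2) \<le> (\<Sum>k<n. (row_comb M m z k)\<^sup>2)"
    by blast
  have "(\<Sum>i<m. y i) = 1" "\<forall>i<m. 0 \<le> y i"
    using y by (simp_all add: weight_simplex_def)
  then have "\<exists>i<m. y i \<noteq> 0"
    by (metis lessThan_iff sum.neutral zero_neq_one)
  with assms \<open>\<forall>i<m. 0 \<le> y i\<close> obtain k where "k < n" "row_comb M m y k \<noteq> 0"
    by blast
  then have norm_pos: "0 < (\<Sum>k<n. (row_comb M m y k)\<^sup>2)"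
    by (intro sum_pos2[of _ k]) auto
  have "0 < (\<Sum>k<n. M j k * row_comb M m y k)" if "j < m" for j
  proof -
    have "(\<Sum>k<n. (row_comb M m y k)\<^sup>2) \<le> (\<Sum>k<n. row_comb M m y k * M j k)"
      using min_norm_row_comb_variational[OF y min basis_in_weight_simplex[OF that]]
      by (simp add: row_comb_basis[OF that])
    with norm_pos show ?thesis
      by (simp add: mult.commute)
  qed
  then show ?thesis
    by blast
qed simp

lemma gordan_alternative:
  "(\<exists>a. \<forall>i<m. 0 < (\<Sum>k<n. M i k * a k)) \<longleftrightarrow>
    \<not> (\<exists>y. (\<forall>i<m. 0 \<le> y i) \<and> (\<exists>i<m. y i \<noteq> 0) \<and> (\<forall>k<n. row_comb M m y k = 0))"
proof
  assume "\<exists>a. \<forall>i<m. 0 < (\<Sum>k<n. M i k * a k)"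
  then obtain a where "\<forall>i<m. 0 < (\<Sum>k<n. M i k * a k)"
    by blast
  then show "\<not> (\<exists>y. (\<forall>i<m. 0 \<le> y i) \<and> (\<exists>i<m. y i \<noteq> 0) \<and> (\<forall>k<n. row_comb M m y k = 0))"
    using no_semipositive_left_null_if_positive_solution by blast
qed (rule positive_solution_if_no_semipositive_left_null)

lemma ex_carrier_vec_iff: "(\<exists>x \<in> carrier_vec n. P x) \<longleftrightarrow> (\<exists>a. P (vec n a))"
proof
  assume "\<exists>x \<in> carrier_vec n. P x"
  then obtain x where "x \<in> carrier_vec n" "P x"
    by blast
  moreover from \<open>x \<in> carrier_vec n\<close> have "vec n (\<lambda>k. x $ k) = x"
    by auto
  ultimately show "\<exists>a. P (vec n a)"
    by metis
qed auto

lemma index_mult_mat_vec_vec: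
  assumes "A \<in> carrier_mat m n" "i < m"
  shows "(A *\<^sub>v vec n a) $ i = (\<Sum>k<n. A $$ (i, k) * a k)"
  using assms by (auto simp: scalar_prod_def lessThan_atLeast0 intro: sum.cong)

lemma gordan_alternative_mat:
  fixes A :: "real mat"
  assumes A: "A \<in> carrier_mat m n"
  shows "(\<exists>x \<in> carrier_vec n. \<forall>i<m. 0 < (A *\<^sub>v x) $ i) \<longleftrightarrow>
    \<not> (\<exists>y \<in> carrier_vec m. transpose_mat A *\<^sub>v y = 0\<^sub>v n \<and> (\<forall>i<m. 0 \<le> y $ i) \<and> y \<noteq> 0\<^sub>v m)"
proof -
  define M where "M i k = A $$ (i, k)" for i k
  have A': "transpose_mat A \<in> carrier_mat n m"
    using A by simp
  have null: "transpose_mat A *\<^sub>v vec m y = 0\<^sub>v n \<longleftrightarrow> (\<forall>k<n. row_comb M m y k = 0)" for y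
  proof -
    have "(transpose_mat A *\<^sub>v vec m y) $ k = row_comb M m y k" if "k < n" for k
    proof -
      have "(transpose_mat A *\<^sub>v vec m y) $ k = (\<Sum>i<m. transpose_mat A $$ (k, i) * y i)"
        by (rule index_mult_mat_vec_vec[OF A' that])
      also have "\<dots> = row_comb M m y k"
        using A that by (auto simp: row_comb_def M_def mult.commute intro: sum.cong)
      finally show ?thesis .
    qed
    with A show ?thesis
      by (simp add: vec_eq_iff)
  qed
  have nonzero: "vec m y \<noteq> 0\<^sub>v m \<longleftrightarrow> (\<exists>i<m. y i \<noteq> 0)" for y :: "nat \<Rightarrow> real"
    by (auto simp: vec_eq_iff)
  have "(\<exists>x \<in> carrier_vec n. \<forall>i<m. 0 < (A *\<^sub>v x) $ i) \<longleftrightarrow> (\<exists>a. \<forall>i<m. 0 < (\<Sum>k<n. M i k * a k))"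
    by (simp add: ex_carrier_vec_iff index_mult_mat_vec_vec[OF A] M_def)
  moreover have "(\<exists>y \<in> carrier_vec m. transpose_mat A *\<^sub>v y = 0\<^sub>v n \<and> (\<forall>i<m. 0 \<le> y $ i) \<and> y \<noteq> 0\<^sub>v m)
      \<longleftrightarrow> (\<exists>y. (\<forall>i<m. 0 \<le> y i) \<and> (\<exists>i<m. y i \<noteq> 0) \<and> (\<forall>k<n. row_comb M m y k = 0))"
    by (simp add: ex_carrier_vec_iff null nonzero conj_ac)
  ultimately show ?thesis
    by (simp only: gordan_alternative)
qed

lemma Xi_mat_carrier: "Xi_mat n \<in> carrier_mat (n - 1) n"
  by (simp add: Xi_mat_def)

lemma perm_mat_carrier: "perm_mat n \<pi> \<in> carrier_mat n n"
  by (simp add: perm_mat_def)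

lemma dist_count_mat_carrier: "dist_count_mat n E \<in> carrier_mat n n"
  by (simp add: dist_count_mat_def)

lemma Xi_perm_mat_mult_carrier:
  "B \<in> carrier_mat n c \<Longrightarrow> Xi_mat n * perm_mat n \<pi> * B \<in> carrier_mat (n - 1) c"
  by (intro mult_carrier_mat[of _ _ n] Xi_mat_carrier perm_mat_carrier)

lemma index_Xi_mat_mult:
  assumes "B \<in> carrier_mat n c" "i < n - 1" "k < c"
  shows "(Xi_mat n * B) $$ (i, k) = B $$ (i + 1, k) - B $$ (i, k)"
proof -
  have "(Xi_mat n * B) $$ (i, k)
      = (\<Sum>l<n. (if l = i + 1 then B $$ (l, k) else 0) - (if l = i then B $$ (l, k) else 0))"
    using assms
    by (auto simp: Xi_mat_def scalar_prod_def lessThan_atLeast0 intro!: sum.cong)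
  also have "\<dots> = B $$ (i + 1, k) - B $$ (i, k)"
    using assms by (simp add: sum_subtractf)
  finally show ?thesis .
qed

lemma index_perm_mat_mult:
  assumes "\<pi> permutes {0..<n}" "B \<in> carrier_mat n c" "i < n" "k < c"
  shows "(perm_mat n \<pi> * B) $$ (i, k) = B $$ (\<pi> i, k)"
proof -
  have "\<pi> i < n"
    using assms(1,3) by (simp add: permutes_in_image)
  with assms show ?thesis
    by (auto simp: perm_mat_def scalar_prod_def lessThan_atLeast0 if_distrib[of "\<lambda>x. x * _"]
        cong: if_cong)
qed

lemma index_Xi_perm_mat_mult:
  assumes "\<pi> permutes {0..<n}" "B \<in> carrier_mat n c" "i < n - 1" "k < c"
  shows "(Xi_mat n * perm_mat n \<pi> * B) $$ (i, k) = B $$ (\<pi> (i + 1), k) - B $$ (\<pi> i, k)"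
proof -
  have "Xi_mat n * perm_mat n \<pi> * B = Xi_mat n * (perm_mat n \<pi> * B)"
    by (rule assoc_mult_mat[OF Xi_mat_carrier perm_mat_carrier assms(2)])
  moreover have "perm_mat n \<pi> * B \<in> carrier_mat n c"
    using perm_mat_carrier assms(2) by (rule mult_carrier_mat)
  ultimately show ?thesis
    using assms by (simp add: index_Xi_mat_mult index_perm_mat_mult)
qed

lemma centrality_gap:
  assumes "\<pi> permutes {0..<n}" "i < n - 1"
  shows "(Xi_mat n * perm_mat n \<pi> * dist_count_mat n E *\<^sub>v vec n a) $ i
    = lin_centrality n E a (\<pi> (i + 1)) - lin_centrality n E a (\<pi> i)"
proof -
  let ?C = "dist_count_mat n E"
  have "(Xi_mat n * perm_mat n \<pi> * ?C *\<^sub>v vec n a) $ i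
      = (\<Sum>k<n. (Xi_mat n * perm_mat n \<pi> * ?C) $$ (i, k) * a k)"
    using Xi_perm_mat_mult_carrier[OF dist_count_mat_carrier] assms(2)
    by (rule index_mult_mat_vec_vec)
  also have "\<dots> = (\<Sum>k<n. (?C $$ (\<pi> (i + 1), k) - ?C $$ (\<pi> i, k)) * a k)"
    using index_Xi_perm_mat_mult[OF assms(1) dist_count_mat_carrier assms(2)] by simp
  finally show ?thesis
    by (simp add: lin_centrality_def left_diff_distrib sum_subtractf)
qed

lemma lin_centrality_uminus: "lin_centrality n E (\<lambda>k. - a k) j = - lin_centrality n E a j"
  by (simp add: lin_centrality_def sum_negf)

lemma representable_iff_positive_solution:
  assumes "\<pi> permutes {0..<n}"
  shows "representable n E \<pi> \<longleftrightarrow>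
    (\<exists>x \<in> carrier_vec n. \<forall>i<n - 1. 0 < (Xi_mat n * perm_mat n \<pi> * dist_count_mat n E *\<^sub>v x) $ i)"
proof -
  let ?P = "Xi_mat n * perm_mat n \<pi> * dist_count_mat n E"
  have "representable n E \<pi> \<longleftrightarrow> (\<exists>a. \<forall>i<n - 1. 0 < (?P *\<^sub>v vec n (\<lambda>k. - a k)) $ i)"
    by (simp add: representable_def centrality_gap[OF assms] lin_centrality_uminus less_diff_conv)
  also have "\<dots> \<longleftrightarrow> (\<exists>a. \<forall>i<n - 1. 0 < (?P *\<^sub>v vec n a) $ i)"
  proof
    assume "\<exists>a. \<forall>i<n - 1. 0 < (?P *\<^sub>v vec n a) $ i"
    then obtain a where "\<forall>i<n - 1. 0 < (?P *\<^sub>v vec n a) $ i"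
      by blast
    then show "\<exists>a. \<forall>i<n - 1. 0 < (?P *\<^sub>v vec n (\<lambda>k. - a k)) $ i"
      by (intro exI[of _ "\<lambda>k. - a k"]) simp
  qed blast
  also have "\<dots> \<longleftrightarrow> (\<exists>x \<in> carrier_vec n. \<forall>i<n - 1. 0 < (?P *\<^sub>v x) $ i)"
    by (rule ex_carrier_vec_iff[symmetric])
  finally show ?thesis .
qed

theorem theorem6:
  fixes n :: nat and E :: "(nat \<times> nat) set" and \<pi> :: "nat \<Rightarrow> nat"
  assumes "graph n E" and "\<pi> permutes {0..<n}"
  shows "representable n E \<pi> \<longleftrightarrow>
    \<not> (\<exists>y \<in> carrier_vec (n - 1).
          transpose_mat (Xi_mat n * perm_mat n \<pi> * dist_count_mat n E) *\<^sub>v y = 0\<^sub>v n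
          \<and> (\<forall>i < n - 1. y $ i \<ge> 0) \<and> y \<noteq> 0\<^sub>v (n - 1))"
  unfolding representable_iff_positive_solution[OF assms(2)]
  by (rule gordan_alternative_mat[OF Xi_perm_mat_mult_carrier[OF dist_count_mat_carrier]])

end
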